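(* Let $n\ge3$, $\mu_1,\mu_2,\beta>0$, $p=2q+1$ with $\frac{n}{n-2}<p<\frac{n+2}{n-2}$, let $(u,v)$ be a positive solution of (S) (radially symmetric), and let $\bar u,\bar v$ be its Kelvin transform and $\bar w_1,\bar w_2$ as defined in the context. Then (1) $\bar u'(r)<0$ and $\bar v'(r)<0$ for all $r>0$; (2) $\bar w_i'(t)>-\delta_0\bar w_i(t)$ for all $t\in\mathbb{R}$, $i=1,2$.
   Context: System (S): $-\Delta u=\mu_1u^{2q+1}+\beta u^qv^{q+1}$, $-\Delta v=\mu_2v^{2q+1}+\beta v^qu^{q+1}$ in $\mathbb{R}^n\setminus\{0\}$; positive solutions are $C^2(\mathbb{R}^n\setminus\{0\})$ pairs with $u,v>0$. Kelvin transform: $\bar u(x)=|x|^{2-n}u(x/|x|^2)$, $\bar v(x)=|x|^{2-n}v(x/|x|^2)$; it solves $-\Delta\bar u=|x|^\alpha(\mu_1\bar u^{2q+1}+\beta\bar u^q\bar v^{q+1})$, $-\Delta\bar v=|x|^\alpha(\mu_2\bar v^{2q+1}+\beta\bar v^q\bar u^{q+1})$ in $\mathbb{R}^n\setminus\{0\}$ with $\alpha=p(n-2)-(n+2)\in(-2,0)$; radial functions are written $\bar u(x)=\bar u(|x|)$. $\delta_0=\frac{2+\alpha}{p-1}$, $\bar w_1(t)=e^{-\delta_0t}\bar u(e^{-t})$, $\bar w_2(t)=e^{-\delta_0t}\bar v(e^{-t})$. *)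

theory Defs
  imports "HOL-Analysis.Analysis"
begin

definition C2_on :: "(real^'n \<Rightarrow> real) \<Rightarrow> (real^'n) set \<Rightarrow> bool" where
  "C2_on u S \<longleftrightarrow> (\<exists>Du :: real^'n \<Rightarrow> ((real^'n) \<Rightarrow>\<^sub>L real).
     \<exists>D2u :: real^'n \<Rightarrow> ((real^'n) \<Rightarrow>\<^sub>L ((real^'n) \<Rightarrow>\<^sub>L real)).
       (\<forall>x\<in>S. (u has_derivative blinfun_apply (Du x)) (at x)) \<and>
       (\<forall>x\<in>S. (Du has_derivative blinfun_apply (D2u x)) (at x)) \<and>
       continuous_on S D2u)"

definition laplacian :: "(real^'n \<Rightarrow> real) \<Rightarrow> real^'n \<Rightarrow> real" where
  "laplacian u x = (\<Sum>i\<in>UNIV. deriv (\<lambda>t. deriv (\<lambda>s. u (x + s *\<^sub>R axis i 1)) t) 0)"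

definition positive_solution_S ::
  "real \<Rightarrow> real \<Rightarrow> real \<Rightarrow> real \<Rightarrow> (real^'n \<Rightarrow> real) \<Rightarrow> (real^'n \<Rightarrow> real) \<Rightarrow> bool" where
  "positive_solution_S \<mu>1 \<mu>2 \<beta> q u v \<longleftrightarrow>
     C2_on u (UNIV - {0}) \<and> C2_on v (UNIV - {0}) \<and>
     (\<forall>x. x \<noteq> 0 \<longrightarrow> u x > 0 \<and> v x > 0) \<and>
     (\<forall>x. x \<noteq> 0 \<longrightarrow>
        - laplacian u x = \<mu>1 * u x powr (2*q+1) + \<beta> * u x powr q * v x powr (q+1)) \<and>
     (\<forall>x. x \<noteq> 0 \<longrightarrow>
        - laplacian v x = \<mu>2 * v x powr (2*q+1) + \<beta> * v x powr q * u x powr (q+1))"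

definition kelvin :: "nat \<Rightarrow> (real^'n \<Rightarrow> real) \<Rightarrow> real^'n \<Rightarrow> real" where
  "kelvin n u x = norm x powr (2 - real n) * u (inverse ((norm x)\<^sup>2) *\<^sub>R x)"

end

theory Submission
  imports Defs
begin

text \<open>
  Let m = n - 2 and let U(s) = u(s e) be the radial profile of u. Since -\<Delta>u > 0, the profile
  satisfies (s^(m+1) U')' < 0, so the flux G(s) = m U + s U' = s^(1-m) (s^m U)' is strictly
  decreasing. If G ever became nonpositive, s^m U would eventually decrease at least like
  -c s^m / m, contradicting U > 0; hence G > 0. The Kelvin transform has profile
  ubar(r) = r^(-m) U(1/r), so ubar'(r) = -r^(-2) (s^m U)'(1/r) < 0, and finally
  w' + \<delta>0 w = -e^(-(1+\<delta>0) t) ubar'(e^(-t)) > 0 for w(t) = e^(-\<delta>0 t) ubar(e^(-t)).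
\<close>

lemma C2_on_ray_has_real_derivatives:
  fixes w :: "real^'n \<Rightarrow> real" and a :: "real^'n"
  assumes "C2_on w (UNIV - {0})" "a \<noteq> 0"
  obtains W1 W2 where
    "\<And>s. s \<noteq> 0 \<Longrightarrow> ((\<lambda>s. w (s *\<^sub>R a)) has_real_derivative W1 s) (at s)"
    "\<And>s. s \<noteq> 0 \<Longrightarrow> (W1 has_real_derivative W2 s) (at s)"
proof -
  obtain Dw :: "real^'n \<Rightarrow> ((real^'n) \<Rightarrow>\<^sub>L real)"
     and D2w :: "real^'n \<Rightarrow> ((real^'n) \<Rightarrow>\<^sub>L ((real^'n) \<Rightarrow>\<^sub>L real))"
    where d1: "\<And>x. x \<noteq> 0 \<Longrightarrow> (w has_derivative blinfun_apply (Dw x)) (at x)"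
      and d2: "\<And>x. x \<noteq> 0 \<Longrightarrow> (Dw has_derivative blinfun_apply (D2w x)) (at x)"
    using assms(1) unfolding C2_on_def by blast
  have ray: "((\<lambda>s::real. s *\<^sub>R a) has_derivative (\<lambda>h. h *\<^sub>R a)) (at s)" for s
    by (auto intro!: derivative_eq_intros)
  show ?thesis
  proof (rule that[of "\<lambda>s. Dw (s *\<^sub>R a) a" "\<lambda>s. D2w (s *\<^sub>R a) a a"])
    fix s :: real assume "s \<noteq> 0"
    then have sa: "s *\<^sub>R a \<noteq> 0" using assms(2) by simp
    show "((\<lambda>s. w (s *\<^sub>R a)) has_real_derivative Dw (s *\<^sub>R a) a) (at s)"
      using has_derivative_compose[OF ray d1[OF sa]] unfolding has_field_derivative_def
      by (rule has_derivative_eq_rhs) (auto simp: blinfun.scaleR_right)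
    have "((\<lambda>s. Dw (s *\<^sub>R a)) has_derivative (\<lambda>h. D2w (s *\<^sub>R a) (h *\<^sub>R a))) (at s)"
      using has_derivative_compose[OF ray d2[OF sa]] .
    from bounded_bilinear.FDERIV[OF bounded_bilinear_blinfun_apply this has_derivative_const[of a]]
    show "((\<lambda>s. Dw (s *\<^sub>R a) a) has_real_derivative D2w (s *\<^sub>R a) a a) (at s)"
      unfolding has_field_derivative_def
      by (rule has_derivative_eq_rhs)
        (auto simp: fun_eq_iff blinfun.scaleR_right blinfun.zero_right blinfun.scaleR_left)
  qed
qed

lemma norm_line_has_real_derivative:
  fixes y a :: "'a::real_inner"
  assumes "y + t *\<^sub>R a \<noteq> 0"
  shows "((\<lambda>t. norm (y + t *\<^sub>R a)) has_real_derivative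
           inner (y + t *\<^sub>R a) a / norm (y + t *\<^sub>R a)) (at t)"
proof -
  have line: "((\<lambda>t. y + t *\<^sub>R a) has_derivative (\<lambda>h. h *\<^sub>R a)) (at t)"
    by (auto intro!: derivative_eq_intros)
  show ?thesis
    unfolding has_field_derivative_def
    using has_derivative_compose[OF line has_derivative_norm[OF assms]]
    by (rule has_derivative_eq_rhs) (simp add: sgn_div_norm fun_eq_iff inner_commute divide_inverse)
qed

lemma radial_second_directional_derivative:
  fixes w :: "'a::real_inner \<Rightarrow> real" and W W1 W2 :: "real \<Rightarrow> real"
  assumes d1: "\<And>s. s > 0 \<Longrightarrow> (W has_real_derivative W1 s) (at s)"
    and d2: "\<And>s. s > 0 \<Longrightarrow> (W1 has_real_derivative W2 s) (at s)"
    and radial: "\<And>z. z \<noteq> 0 \<Longrightarrow> w z = W (norm z)"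
    and y: "y \<noteq> 0" and a: "norm a = 1"
  shows "deriv (\<lambda>t. deriv (\<lambda>s. w (y + s *\<^sub>R a)) t) 0
       = (W2 (norm y) - W1 (norm y) / norm y) * (inner y a / norm y)\<^sup>2 + W1 (norm y) / norm y"
proof -
  define r where "r = norm y"
  define N where "N t = norm (y + t *\<^sub>R a)" for t
  have r: "r > 0" using y by (simp add: r_def)
  have a_unit: "inner a a = 1" using a by (simp add: dot_square_norm)
  have N_pos: "N t > 0" if "t \<in> ball 0 r" for t
  proof -
    have "r \<le> N t + norm (t *\<^sub>R a)"
      using norm_triangle_sub[of y "y + t *\<^sub>R a"] by (simp add: r_def N_def)
    then show ?thesis using that a by simp
  qed
  have N_deriv: "(N has_real_derivative inner (y + t *\<^sub>R a) a / N t) (at t)" if "t \<in> ball 0 r" for t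
    unfolding N_def using N_pos[OF that] by (intro norm_line_has_real_derivative) (auto simp: N_def)
  define \<psi> where "\<psi> t = W1 (N t) * (inner (y + t *\<^sub>R a) a / N t)" for t
  have first_deriv: "deriv (\<lambda>s. w (y + s *\<^sub>R a)) t = \<psi> t" if t: "t \<in> ball 0 r" for t
  proof (rule DERIV_imp_deriv)
    have eq: "W (N s) = w (y + s *\<^sub>R a)" if "s \<in> ball 0 r" for s
      using radial N_pos[OF that] by (auto simp: N_def)
    have "((\<lambda>s. W (N s)) has_real_derivative \<psi> t) (at t)"
      unfolding \<psi>_def by (rule DERIV_chain2[OF d1[OF N_pos[OF t]] N_deriv[OF t]])
    then show "((\<lambda>s. w (y + s *\<^sub>R a)) has_real_derivative \<psi> t) (at t)"
      by (rule has_field_derivative_transform_within_open[where S="ball 0 r"]) (use t eq in auto)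
  qed
  have N0: "N 0 = r" by (simp add: N_def r_def)
  have "0 \<in> ball 0 r" using r by simp
  from N_deriv[OF this] have N0_deriv: "(N has_real_derivative inner y a / r) (at 0)"
    by (simp add: N0)
  have "((\<lambda>t. inner (y + t *\<^sub>R a) a / N t) has_real_derivative
      (inner a a * N 0 - inner (y + 0 *\<^sub>R a) a * (inner y a / r)) / (N 0 * N 0)) (at 0)"
    using N0_deriv r N0 by (intro DERIV_divide) (auto intro!: derivative_eq_intros simp: inner_add_left)
  from DERIV_mult[OF DERIV_chain2[OF d2[OF r, folded N0] N0_deriv[folded N0]] this]
  have "(\<psi> has_real_derivative
      W2 r * (inner y a / r) * (inner y a / r) + (r - inner y a * (inner y a / r)) / r\<^sup>2 * W1 r) (at 0)"
    unfolding \<psi>_def N0 a_unit by (simp add: power2_eq_square)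
  also have "W2 r * (inner y a / r) * (inner y a / r) + (r - inner y a * (inner y a / r)) / r\<^sup>2 * W1 r
      = (W2 r - W1 r / r) * (inner y a / r)\<^sup>2 + W1 r / r"
    using r by (simp add: field_simps power2_eq_square)
  finally have "(\<psi> has_real_derivative (W2 r - W1 r / r) * (inner y a / r)\<^sup>2 + W1 r / r) (at 0)" .
  then have "((\<lambda>t. deriv (\<lambda>s. w (y + s *\<^sub>R a)) t) has_real_derivative
      (W2 r - W1 r / r) * (inner y a / r)\<^sup>2 + W1 r / r) (at 0)"
    by (rule has_field_derivative_transform_within_open[where S="ball 0 r"]) (use r first_deriv in auto)
  then show ?thesis unfolding r_def by (rule DERIV_imp_deriv)
qed

lemma laplacian_radial:
  fixes w :: "real^'n \<Rightarrow> real" and W W1 W2 :: "real \<Rightarrow> real"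
  assumes d1: "\<And>s. s > 0 \<Longrightarrow> (W has_real_derivative W1 s) (at s)"
    and d2: "\<And>s. s > 0 \<Longrightarrow> (W1 has_real_derivative W2 s) (at s)"
    and radial: "\<And>z. z \<noteq> 0 \<Longrightarrow> w z = W (norm z)"
    and y: "y \<noteq> 0"
  shows "laplacian w y = W2 (norm y) + (real CARD('n) - 1) / norm y * W1 (norm y)"
proof -
  define r where "r = norm y"
  have r: "r > 0" using y by (simp add: r_def)
  have "laplacian w y = (\<Sum>i\<in>UNIV. (W2 r - W1 r / r) * (y$i / r)\<^sup>2 + W1 r / r)"
    unfolding laplacian_def r_def
    by (simp add: radial_second_directional_derivative[OF d1 d2 radial y] inner_axis)
  also have "\<dots> = (W2 r - W1 r / r) / r\<^sup>2 * (\<Sum>i\<in>UNIV. (y$i)\<^sup>2) + real CARD('n) * (W1 r / r)"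
    by (simp add: sum.distrib sum_distrib_left power_divide)
  also have "(\<Sum>i\<in>UNIV. (y$i)\<^sup>2) = r\<^sup>2"
    unfolding r_def power2_norm_eq_inner by (simp add: inner_vec_def power2_eq_square)
  also have "(W2 r - W1 r / r) / r\<^sup>2 * r\<^sup>2 + real CARD('n) * (W1 r / r)
      = W2 r + (real CARD('n) - 1) / r * W1 r"
    using r by (simp add: field_simps)
  finally show ?thesis by (simp add: r_def)
qed

lemma power_mult_has_real_derivative:
  fixes U :: "real \<Rightarrow> real" and m :: nat
  assumes "(U has_real_derivative U1) (at s)" "m \<ge> 1"
  shows "((\<lambda>s. s ^ m * U s) has_real_derivative s ^ (m - 1) * (real m * U s + s * U1)) (at s)"
proof -
  have "((\<lambda>s. s ^ m * U s) has_real_derivative real m * s ^ (m - 1) * U s + s ^ m * U1) (at s)"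
    using assms(1) by (auto intro!: derivative_eq_intros)
  moreover have "s ^ m = s ^ (m - 1) * s"
    using assms(2) by (simp add: power_Suc2[symmetric])
  ultimately show ?thesis by (simp add: algebra_simps)
qed

lemma deriv_le_neg_power_eventually_neg:
  fixes K K1 :: "real \<Rightarrow> real" and m :: nat
  assumes m: "m \<ge> 1" and c: "c > 0" and s1: "s1 > 0"
    and deriv: "\<And>s. s \<ge> s1 \<Longrightarrow> (K has_real_derivative K1 s) (at s)"
    and bound: "\<And>s. s \<ge> s1 \<Longrightarrow> K1 s \<le> - c * s ^ (m - 1)"
  obtains S where "S \<ge> s1" "K S < 0"
proof -
  define \<phi> where "\<phi> s = K s + c / real m * s ^ m" for s
  have \<phi>_le: "\<phi> s \<le> \<phi> s1" if "s \<ge> s1" for s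
  proof (rule DERIV_nonpos_imp_nonincreasing[OF that])
    fix x assume "s1 \<le> x"
    then have "(\<phi> has_real_derivative K1 x + c * x ^ (m - 1)) (at x)"
      using deriv m unfolding \<phi>_def by (auto intro!: derivative_eq_intros)
    moreover have "K1 x + c * x ^ (m - 1) \<le> 0"
      using bound[OF \<open>s1 \<le> x\<close>] by simp
    ultimately show "\<exists>y. (\<phi> has_real_derivative y) (at x) \<and> y \<le> 0" by blast
  qed
  define S where "S = max s1 (max 1 (real m * (\<phi> s1 + 1) / c))"
  have S: "S \<ge> s1" "S \<ge> 1" "S \<ge> real m * (\<phi> s1 + 1) / c"
    by (auto simp: S_def)
  have "c / real m * S \<ge> c / real m * (real m * (\<phi> s1 + 1) / c)"
    using S(3) c m by (intro mult_left_mono) auto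
  then have S_large: "c / real m * S \<ge> \<phi> s1 + 1"
    using c m by simp
  have "S \<le> S ^ m"
    using power_increasing[OF m S(2)] by simp
  then have "c / real m * S \<le> c / real m * S ^ m"
    using c by (intro mult_left_mono) auto
  then have "K S < 0"
    using \<phi>_le[OF S(1)] S_large unfolding \<phi>_def by linarith
  with S(1) show ?thesis by (rule that)
qed

lemma radial_superharmonic_flux_pos:
  fixes U U1 U2 :: "real \<Rightarrow> real" and m :: nat
  assumes m: "m \<ge> 1"
    and d1: "\<And>s. s > 0 \<Longrightarrow> (U has_real_derivative U1 s) (at s)"
    and d2: "\<And>s. s > 0 \<Longrightarrow> (U1 has_real_derivative U2 s) (at s)"
    and superharmonic: "\<And>s. s > 0 \<Longrightarrow> U2 s + (real m + 1) / s * U1 s < 0"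
    and U_pos: "\<And>s. s > 0 \<Longrightarrow> U s > 0"
    and s0: "s0 > 0"
  shows "real m * U s0 + s0 * U1 s0 > 0"
proof (rule ccontr)
  assume "\<not> ?thesis"
  then have G_s0: "real m * U s0 + s0 * U1 s0 \<le> 0" by simp
  define G where "G s = real m * U s + s * U1 s" for s
  have G_deriv: "(G has_real_derivative s * (U2 s + (real m + 1) / s * U1 s)) (at s)" if "s > 0" for s
  proof -
    have "(G has_real_derivative real m * U1 s + (U1 s + s * U2 s)) (at s)"
      unfolding G_def using d1[OF that] d2[OF that] by (auto intro!: derivative_eq_intros)
    moreover have "real m * U1 s + (U1 s + s * U2 s) = s * (U2 s + (real m + 1) / s * U1 s)"
      using that by (simp add: field_simps)
    ultimately show ?thesis by simp
  qed
  have G_decreasing: "G b < G a" if "0 < a" "a < b" for a b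
  proof (rule DERIV_neg_imp_decreasing[OF that(2)])
    fix x assume "a \<le> x"
    then have "x > 0" using that by linarith
    then show "\<exists>y. (G has_real_derivative y) (at x) \<and> y < 0"
      using G_deriv superharmonic by (blast intro: mult_pos_neg)
  qed
  define s1 where "s1 = s0 + 1"
  define c where "c = - G s1"
  have s1: "s1 > 0" "s0 < s1" using s0 by (auto simp: s1_def)
  have c: "c > 0" using G_decreasing[OF s0 s1(2)] G_s0 s0 by (simp add: c_def G_def)
  have G_le: "G s \<le> - c" if "s \<ge> s1" for s
    using G_decreasing[OF s1(1), of s] that by (cases "s = s1") (auto simp: c_def)
  obtain S where "S \<ge> s1" "S ^ m * U S < 0"
  proof (rule deriv_le_neg_power_eventually_neg[OF m c s1(1)])
    fix s assume "s \<ge> s1"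
    then have "s > 0" using s1 by linarith
    show "((\<lambda>s. s ^ m * U s) has_real_derivative s ^ (m - 1) * G s) (at s)"
      unfolding G_def by (rule power_mult_has_real_derivative[OF d1[OF \<open>s > 0\<close>] m])
    show "s ^ (m - 1) * G s \<le> - c * s ^ (m - 1)"
      using mult_left_mono[OF G_le[OF \<open>s \<ge> s1\<close>], of "s ^ (m - 1)"] \<open>s > 0\<close>
      by (simp add: mult.commute)
  qed
  moreover have "S ^ m * U S > 0" using \<open>S \<ge> s1\<close> s1 U_pos[of S] by simp
  ultimately show False by linarith
qed

lemma inverse_power_mult_has_neg_derivative:
  fixes U U1 ub :: "real \<Rightarrow> real" and m :: nat
  assumes m: "m \<ge> 1"
    and d1: "\<And>s. s > 0 \<Longrightarrow> (U has_real_derivative U1 s) (at s)"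
    and flux: "\<And>s. s > 0 \<Longrightarrow> real m * U s + s * U1 s > 0"
    and ub: "\<And>r. r > 0 \<Longrightarrow> ub r = inverse r ^ m * U (inverse r)"
    and r: "r > 0"
  obtains d where "(ub has_real_derivative d) (at r)" "d < 0"
proof -
  define s where "s = inverse r"
  define D where "D = s ^ (m - 1) * (real m * U s + s * U1 s)"
  have s: "s > 0" using r by (simp add: s_def)
  have "((\<lambda>s. s ^ m * U s) has_real_derivative D) (at (inverse r))"
    unfolding D_def s_def by (rule power_mult_has_real_derivative[OF d1 m]) (use s s_def in simp)
  from DERIV_chain2[OF this DERIV_inverse[of r]]
  have "((\<lambda>r. inverse r ^ m * U (inverse r)) has_real_derivative D * - (inverse r ^ 2)) (at r)"
    using r by (simp add: power2_eq_square)
  then have "(ub has_real_derivative D * - (inverse r ^ 2)) (at r)"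
    by (rule has_field_derivative_transform_within_open[where S="{0<..}"]) (use r ub in auto)
  moreover have "D * - (inverse r ^ 2) < 0"
    using flux[OF s] s r by (simp add: D_def mult_pos_neg)
  ultimately show ?thesis by (rule that)
qed

lemma kelvin_at_inversion:
  fixes u :: "real^'n \<Rightarrow> real"
  assumes "z \<noteq> 0"
  shows "kelvin n u (inverse ((norm z)\<^sup>2) *\<^sub>R z) = norm z powr (real n - 2) * u z"
proof -
  have x: "norm (inverse ((norm z)\<^sup>2) *\<^sub>R z) = inverse (norm z)"
    using assms by (simp add: power2_eq_square)
  have "inverse ((norm (inverse ((norm z)\<^sup>2) *\<^sub>R z))\<^sup>2) *\<^sub>R inverse ((norm z)\<^sup>2) *\<^sub>R z = z"
    using assms unfolding x by (simp add: power_inverse)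
  moreover have "inverse (norm z) powr (2 - real n) = norm z powr (real n - 2)"
    by (simp add: inverse_powr powr_minus[symmetric])
  ultimately show ?thesis
    unfolding kelvin_def x by simp
qed

lemma radial_kelvin_profile_has_neg_derivative:
  fixes u :: "real^'n \<Rightarrow> real" and ub :: "real \<Rightarrow> real"
  assumes n: "CARD('n) \<ge> 3" and C2: "C2_on u (UNIV - {0})"
    and u_pos: "\<And>x. x \<noteq> 0 \<Longrightarrow> u x > 0"
    and superharmonic: "\<And>x. x \<noteq> 0 \<Longrightarrow> laplacian u x < 0"
    and radial: "\<And>x. x \<noteq> 0 \<Longrightarrow> kelvin CARD('n) u x = ub (norm x)"
    and r: "r > 0"
  obtains d where "(ub has_real_derivative d) (at r)" "d < 0"
proof -
  define m where "m = CARD('n) - 2"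
  have m: "m \<ge> 1" "real CARD('n) - 2 = real m" "real CARD('n) - 1 = real m + 1"
    using n by (auto simp: m_def of_nat_diff)
  define a :: "real^'n" where "a = axis undefined 1"
  have a: "norm a = 1" "a \<noteq> 0" by (auto simp: a_def)
  define U where "U s = u (s *\<^sub>R a)" for s
  obtain U1 U2 where d1: "\<And>s. s > 0 \<Longrightarrow> (U has_real_derivative U1 s) (at s)"
    and d2: "\<And>s. s > 0 \<Longrightarrow> (U1 has_real_derivative U2 s) (at s)"
    using C2_on_ray_has_real_derivatives[OF C2 a(2)] unfolding U_def[abs_def] by (metis less_irrefl)
  have profile: "norm z powr real m * u z = ub (inverse (norm z))" if "z \<noteq> 0" for z
    using kelvin_at_inversion[OF that, of "CARD('n)" u] radial[of "inverse ((norm z)\<^sup>2) *\<^sub>R z"] that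
    by (simp add: m(2) power2_eq_square field_simps)
  have U_radial: "u z = U (norm z)" if "z \<noteq> 0" for z
  proof -
    have "norm z *\<^sub>R a \<noteq> 0" "norm (norm z *\<^sub>R a) = norm z" using that a by auto
    then have "norm z powr real m * u z = norm z powr real m * U (norm z)"
      using profile[OF that] profile[of "norm z *\<^sub>R a"] by (simp add: U_def)
    then show ?thesis using that by simp
  qed
  have ub: "ub r = inverse r ^ m * U (inverse r)" if "r > 0" for r
    using profile[of "inverse r *\<^sub>R a"] that a by (simp add: U_def powr_realpow)
  have "U2 s + (real m + 1) / s * U1 s < 0" if "s > 0" for s
    using laplacian_radial[OF d1 d2 U_radial, of "s *\<^sub>R a"] superharmonic[of "s *\<^sub>R a"] that a
    by (simp add: m(3))
  then have flux: "real m * U s + s * U1 s > 0" if "s > 0" for s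
    using radial_superharmonic_flux_pos[OF m(1) d1 d2 _ _ that] u_pos a by (simp add: U_def)
  show ?thesis by (rule inverse_power_mult_has_neg_derivative[OF m(1) d1 flux ub r]) (auto intro: that)
qed

lemma exp_rescaled_deriv_gt:
  fixes ub :: "real \<Rightarrow> real"
  assumes "(ub has_real_derivative d) (at (exp (- t)))" "d < 0"
  shows "deriv (\<lambda>s. exp (- \<delta> * s) * ub (exp (- s))) t > - \<delta> * (exp (- \<delta> * t) * ub (exp (- t)))"
proof -
  have "((\<lambda>s. exp (- \<delta> * s) * ub (exp (- s))) has_real_derivative
      - \<delta> * (exp (- \<delta> * t) * ub (exp (- t))) - d * exp (- t) * exp (- \<delta> * t)) (at t)"
  proof -
    have "((\<lambda>s. exp (- s)) has_real_derivative - exp (- t)) (at t)"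
      by (auto intro!: derivative_eq_intros)
    from DERIV_chain2[where f=ub, OF assms(1) this]
    show ?thesis by (auto intro!: derivative_eq_intros simp: algebra_simps)
  qed
  moreover have "d * exp (- t) * exp (- \<delta> * t) < 0"
    using assms(2) by (simp add: mult_neg_pos)
  ultimately show ?thesis
    by (simp add: DERIV_imp_deriv)
qed

lemma positive_solution_S_superharmonic:
  assumes "\<mu>1 > 0" "\<mu>2 > 0" "\<beta> > 0" "positive_solution_S \<mu>1 \<mu>2 \<beta> q u v" "x \<noteq> 0"
  shows "laplacian u x < 0" "laplacian v x < 0"
proof -
  have "u x > 0" "v x > 0"
    and "- laplacian u x = \<mu>1 * u x powr (2*q+1) + \<beta> * u x powr q * v x powr (q+1)"
    and "- laplacian v x = \<mu>2 * v x powr (2*q+1) + \<beta> * v x powr q * u x powr (q+1)"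
    using assms(4,5) unfolding positive_solution_S_def by auto
  moreover have "\<mu>1 * u x powr (2*q+1) > 0" "\<mu>2 * v x powr (2*q+1) > 0"
    "\<beta> * u x powr q * v x powr (q+1) > 0" "\<beta> * v x powr q * u x powr (q+1) > 0"
    using assms(1-3) \<open>u x > 0\<close> \<open>v x > 0\<close> by simp_all
  ultimately show "laplacian u x < 0" "laplacian v x < 0" by linarith+
qed

theorem lemma4p4:
  fixes u v :: "real^'n \<Rightarrow> real"
    and ubar vbar :: "real \<Rightarrow> real"
    and \<mu>1 \<mu>2 \<beta> q p \<alpha> \<delta>0 :: real
    and n :: nat
  defines "n \<equiv> CARD('n)"
  defines "p \<equiv> 2*q + 1"
  defines "\<alpha> \<equiv> p * (real n - 2) - (real n + 2)"
  defines "\<delta>0 \<equiv> (2 + \<alpha>) / (p - 1)"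
  assumes n3: "n \<ge> 3"
    and pos: "\<mu>1 > 0" "\<mu>2 > 0" "\<beta> > 0"
    and prange: "real n / (real n - 2) < p" "p < (real n + 2) / (real n - 2)"
    and sol: "positive_solution_S \<mu>1 \<mu>2 \<beta> q u v"
    and radial: "\<forall>x. x \<noteq> 0 \<longrightarrow> kelvin n u x = ubar (norm x)"
                "\<forall>x. x \<noteq> 0 \<longrightarrow> kelvin n v x = vbar (norm x)"
  shows "(\<forall>r>0. deriv ubar r < 0 \<and> deriv vbar r < 0) \<and>
         (\<forall>t::real.
            deriv (\<lambda>s. exp (- \<delta>0 * s) * ubar (exp (- s))) t
              > - \<delta>0 * (exp (- \<delta>0 * t) * ubar (exp (- t))) \<and>
            deriv (\<lambda>s. exp (- \<delta>0 * s) * vbar (exp (- s))) t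
              > - \<delta>0 * (exp (- \<delta>0 * t) * vbar (exp (- t))))"
proof -
  have n: "CARD('n) \<ge> 3" using n3 by (simp add: n_def)
  have C2: "C2_on u (UNIV - {0})" "C2_on v (UNIV - {0})"
    and u_pos: "\<And>x. x \<noteq> 0 \<Longrightarrow> u x > 0" and v_pos: "\<And>x. x \<noteq> 0 \<Longrightarrow> v x > 0"
    using sol unfolding positive_solution_S_def by auto
  have superharmonic: "laplacian u x < 0" "laplacian v x < 0" if "x \<noteq> 0" for x
    using positive_solution_S_superharmonic[OF pos sol that] by auto
  have du: "\<exists>d. (ubar has_real_derivative d) (at r) \<and> d < 0" if "r > 0" for r
    by (rule radial_kelvin_profile_has_neg_derivative[OF n C2(1) u_pos superharmonic(1) _ that])
      (use radial(1) in \<open>auto simp: n_def\<close>)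
  have dv: "\<exists>d. (vbar has_real_derivative d) (at r) \<and> d < 0" if "r > 0" for r
    by (rule radial_kelvin_profile_has_neg_derivative[OF n C2(2) v_pos superharmonic(2) _ that])
      (use radial(2) in \<open>auto simp: n_def\<close>)
  show ?thesis
  proof (intro conjI allI impI)
    fix r :: real assume "r > 0"
    show "deriv ubar r < 0" "deriv vbar r < 0"
      using du[OF \<open>r > 0\<close>] dv[OF \<open>r > 0\<close>] by (auto dest: DERIV_imp_deriv)
  next
    fix t :: real
    show "deriv (\<lambda>s. exp (- \<delta>0 * s) * ubar (exp (- s))) t > - \<delta>0 * (exp (- \<delta>0 * t) * ubar (exp (- t)))"
      using du[of "exp (- t)"] exp_rescaled_deriv_gt by auto
    show "deriv (\<lambda>s. exp (- \<delta>0 * s) * vbar (exp (- s))) t > - \<delta>0 * (exp (- \<delta>0 * t) * vbar (exp (- t)))"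
      using dv[of "exp (- t)"] exp_rescaled_deriv_gt by auto
  qed
qed

end
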